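(* Suppose the prelimit coefficients $K^{(k)},L^{(k)}_i,M^{(k)}_i,N^{(k)}_{ij}$ satisfy Condition 1 (the Hudson–Parthasarathy conditions on $\mathcal D$, see context) and Assumptions 1–3 hold. Then the limit coefficients $K,L_i,M_i,N_{ij}$ of Assumption 3 satisfy on $\mathcal D_0=P_0\mathcal D$ the Hudson–Parthasarathy relations $$K+K^\dagger=-\sum_{i=1}^nL_iL_i^\dagger,\qquad M_i=-\sum_{j=1}^nN_{ij}L_j^\dagger,\qquad \sum_{j=1}^nN_{mj}N_{\ell j}^\dagger=\sum_{j=1}^nN_{jm}^\dagger N_{j\ell}=\delta_{m\ell}.$$
   Context: $\mathcal H$ is a separable complex Hilbert space with dense subspace $\mathcal D$, $n\in\mathbb N$. Operators written $X,X^\dagger$ on a common domain $V$ satisfy $\langle u,Xv\rangle=\langle X^\dagger u,v\rangle$ for $u,v\in V$. For each $k\in\mathbb N$ there are operators $K^{(k)},L^{(k)}_i,M^{(k)}_i,N^{(k)}_{ij}$ ($1\le i,j\le n$) which, together with their $\dagger$'s, have common invariant domain $\mathcal D$ and satisfy on $\mathcal D$ (Condition 1): $K^{(k)}+K^{(k)\dagger}=-\sum_iL^{(k)}_iL^{(k)\dagger}_i$, $M^{(k)}_i=-\sum_jN^{(k)}_{ij}L^{(k)\dagger}_j$, $\sum_jN^{(k)}_{mj}N^{(k)\dagger}_{\ell j}=\sum_jN^{(k)\dagger}_{jm}N^{(k)}_{j\ell}=\delta_{m\ell}$. Assumption 1 (singular scaling): there are operators $Y,Y^\dagger,A,A^\dagger,B,B^\dagger,F_i,F_i^\dagger,G_i,G_i^\dagger,W_{ij},W_{ij}^\dagger$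 with common invariant domain $\mathcal D$ such that $K^{(k)}=k^2Y+kA+B$, $L^{(k)}_i=kF_i+G_i$, $N^{(k)}_{ij}=W_{ij}$ for all $k$ and $i,j$. Assumption 2 (structure): there is a closed subspace $\mathcal H_0\subset\mathcal H$, with $P_0$ the orthogonal projection onto $\mathcal H_0$ and $P_1=I-P_0$, such that (a) $P_0\mathcal D\subset\mathcal D$; (b) $YP_0=0$ on $\mathcal D$; (c) there exist $\tilde Y,\tilde Y^\dagger$ with common invariant domain $\mathcal D$ with $\tilde YY=Y\tilde Y=P_1$ on $\mathcal D$; (d) $F_j^\dagger P_0=0$ on $\mathcal D$ for all $j$; (e) $P_0AP_0=0$ on $\mathcal D$. Set $\mathcal D_0=P_0\mathcal D$. Assumption 3 (limit coefficients): define on $\mathcal H_0$: $K=P_0(B-A\tilde YA)P_0$, $L_i=P_0(G_i-A\tilde YF_i)P_0$, $M_i=-\sum_jP_0W_{ij}(G_j^\dagger-F_j^\dagger\tilde YA)P_0$, $N_{ij}=\sum_\ell P_0W_{i\ell}(F_\ell^\dagger\tilde YF_j+\delta_{\ell j})P_0$; it is assumed that $K,K^\dagger,L_i,L_i^\dagger,M_i,M_i^\dagger,N_{ij},N_{ij}^\dagger$ have common invariant domain $\mathcal D_0$, and that on $\mathcal D$, for all $i,j$: $P_0(G_i-A\tilde YF_i)P_1=0$, $\sum_\ell P_0W_{i\ell}(F_\ell^\dagger\tilde YF_j+\delta_{\ell j})P_1=0$, and $\sum_\ell P_1W_{i\ell}(F_\ell^\dagger\tilde YF_j+\delta_{\ell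 j})P_0=0$. *)

theory Defs
  imports "HOL-Analysis.Analysis"
begin

text \<open>HOL-Analysis only provides real inner product spaces, so we
introduce a class of complex inner product spaces compatible with the library's real normed
(and complete) structure: complex scalar multiplication extends real scalar multiplication,
the inner product is conjugate-linear in the first and linear in the second argument, and
the library norm is the norm induced by the inner product.\<close>

class chilbert = real_normed_vector + complete_space +
  fixes scaleC :: "complex \<Rightarrow> 'a \<Rightarrow> 'a" (infixr "*\<^sub>C" 75)
    and cinner :: "'a \<Rightarrow> 'a \<Rightarrow> complex"
  assumes scaleC_add_right: "a *\<^sub>C (x + y) = a *\<^sub>C x + a *\<^sub>C y"
    and scaleC_add_left: "(a + b) *\<^sub>C x = a *\<^sub>C x + b *\<^sub>C x"
    and scaleC_scaleC: "a *\<^sub>C (b *\<^sub>C x) = (a * b) *\<^sub>C x"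
    and scaleC_one: "1 *\<^sub>C x = x"
    and scaleR_scaleC: "scaleR r x = complex_of_real r *\<^sub>C x"
    and cinner_add_right: "cinner x (y + z) = cinner x y + cinner x z"
    and cinner_scaleC_right: "cinner x (a *\<^sub>C y) = a * cinner x y"
    and cinner_commute: "cinner y x = cnj (cinner x y)"
    and cinner_self_norm: "cinner x x = complex_of_real ((norm x)\<^sup>2)"

definition csubspace :: "'a::chilbert set \<Rightarrow> bool" where
  "csubspace S \<longleftrightarrow> 0 \<in> S \<and> (\<forall>x\<in>S. \<forall>y\<in>S. x + y \<in> S) \<and> (\<forall>c. \<forall>x\<in>S. c *\<^sub>C x \<in> S)"

definition separable_hilbert :: "'a::chilbert itself \<Rightarrow> bool" where
  "separable_hilbert _ \<longleftrightarrow> (\<exists>C::'a set. countable C \<and> closure C = UNIV)"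

definition common_inv_dom :: "'a::chilbert set \<Rightarrow> ('a \<Rightarrow> 'a) \<Rightarrow> ('a \<Rightarrow> 'a) \<Rightarrow> bool" where
  "common_inv_dom V X Xd \<longleftrightarrow> X ` V \<subseteq> V \<and> Xd ` V \<subseteq> V \<and>
     (\<forall>u\<in>V. \<forall>v\<in>V. cinner u (X v) = cinner (Xd u) v)"

definition is_orth_proj :: "'a::chilbert set \<Rightarrow> ('a \<Rightarrow> 'a) \<Rightarrow> bool" where
  "is_orth_proj H0 P \<longleftrightarrow> (\<forall>x. P x \<in> H0 \<and> (\<forall>h\<in>H0. cinner h (x - P x) = 0))"

definition kdelta :: "nat \<Rightarrow> nat \<Rightarrow> 'a::chilbert \<Rightarrow> 'a" where
  "kdelta m l v = (if m = l then v else 0)"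

text \<open>Limit coefficients of Assumption 3 (operators on H0; P0 = projection, Yt = tilde Y).\<close>
definition limK :: "('a::chilbert \<Rightarrow> 'a) \<Rightarrow> ('a \<Rightarrow> 'a) \<Rightarrow> ('a \<Rightarrow> 'a) \<Rightarrow> ('a \<Rightarrow> 'a) \<Rightarrow> 'a \<Rightarrow> 'a" where
  "limK P0 A B Yt v = P0 (B (P0 v) - A (Yt (A (P0 v))))"

definition limL :: "('a::chilbert \<Rightarrow> 'a) \<Rightarrow> ('a \<Rightarrow> 'a) \<Rightarrow> (nat \<Rightarrow> 'a \<Rightarrow> 'a) \<Rightarrow> (nat \<Rightarrow> 'a \<Rightarrow> 'a)
    \<Rightarrow> ('a \<Rightarrow> 'a) \<Rightarrow> nat \<Rightarrow> 'a \<Rightarrow> 'a" where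
  "limL P0 A F G Yt i v = P0 (G i (P0 v) - A (Yt (F i (P0 v))))"

definition limM :: "nat \<Rightarrow> ('a::chilbert \<Rightarrow> 'a) \<Rightarrow> ('a \<Rightarrow> 'a) \<Rightarrow> (nat \<Rightarrow> 'a \<Rightarrow> 'a)
    \<Rightarrow> (nat \<Rightarrow> 'a \<Rightarrow> 'a) \<Rightarrow> (nat \<Rightarrow> nat \<Rightarrow> 'a \<Rightarrow> 'a) \<Rightarrow> ('a \<Rightarrow> 'a) \<Rightarrow> nat \<Rightarrow> 'a \<Rightarrow> 'a" where
  "limM n P0 A Fd Gd W Yt i v =
     - (\<Sum>j = 1..n. P0 (W i j (Gd j (P0 v) - Fd j (Yt (A (P0 v))))))"

definition limN :: "nat \<Rightarrow> ('a::chilbert \<Rightarrow> 'a) \<Rightarrow> (nat \<Rightarrow> 'a \<Rightarrow> 'a) \<Rightarrow> (nat \<Rightarrow> 'a \<Rightarrow> 'a)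
    \<Rightarrow> (nat \<Rightarrow> nat \<Rightarrow> 'a \<Rightarrow> 'a) \<Rightarrow> ('a \<Rightarrow> 'a) \<Rightarrow> nat \<Rightarrow> nat \<Rightarrow> 'a \<Rightarrow> 'a" where
  "limN n P0 F Fd W Yt i j v =
     (\<Sum>l = 1..n. P0 (W i l (Fd l (Yt (F j (P0 v))) + kdelta l j (P0 v))))"

end

theory Submission
  imports Defs
begin

(* The proof is purely algebraic.  Linearity of the operators is not assumed: it follows from the
   existence of adjoints on the invariant domain, and every identity between adjoints is proved by
   testing against vectors of the domain (a vector of a subspace is determined by its inner
   products with that subspace).

   Locale hp_prelimit collects Condition 1 and Assumption 1.  Expanding the K-relation in powers
   of k gives  Y + Y' = -sum F F',  A + A' = -sum (F G' + G F'),  B + B' = -sum G G'  (primes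
   denoting daggers); the N-relations say that W is unitary.

   Locale hp_limit adds Assumptions 2 and 3.  There the adjoints of the limit coefficients are
   computed, Assumption 3 is used to remove the inner projections P0, and the four
   Hudson-Parthasarathy relations follow by direct calculation.  The theorem lemma2 interprets
   hp_limit. *)

section \<open>Inner product algebra\<close>

lemma cinner_zero_right [simp]: "cinner x (0::'a::chilbert) = 0"
  using cinner_add_right[of x 0 0] by simp

lemma cinner_zero_left [simp]: "cinner (0::'a::chilbert) x = 0"
  by (metis cinner_commute cinner_zero_right complex_cnj_zero)

lemma cinner_minus_right: "cinner x (- y :: 'a::chilbert) = - cinner x y"
proof -
  have "cinner x y + cinner x (- y) = 0" using cinner_add_right[of x y "- y"] by simp
  then show ?thesis using minus_unique by metis
qed

lemma cinner_diff_right: "cinner x (y - z :: 'a::chilbert) = cinner x y - cinner x z"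
  using cinner_add_right[of x y "- z"] by (simp add: cinner_minus_right)

lemma cinner_scaleR_right: "cinner x (r *\<^sub>R y :: 'a::chilbert) = complex_of_real r * cinner x y"
  by (simp add: scaleR_scaleC cinner_scaleC_right)

lemma cinner_sum_right: "cinner x (sum f S :: 'a::chilbert) = (\<Sum>i\<in>S. cinner x (f i))"
  by (induction S rule: infinite_finite_induct) (auto simp: cinner_add_right)

lemma cinner_add_left: "cinner (x + y :: 'a::chilbert) z = cinner x z + cinner y z"
  by (metis cinner_add_right cinner_commute complex_cnj_add)

lemma cinner_minus_left: "cinner (- x :: 'a::chilbert) y = - cinner x y"
  by (metis cinner_commute cinner_minus_right complex_cnj_minus)

lemma cinner_diff_left: "cinner (x - y :: 'a::chilbert) z = cinner x z - cinner y z"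
  by (metis cinner_commute cinner_diff_right complex_cnj_diff)

lemma cinner_scaleR_left: "cinner (r *\<^sub>R x :: 'a::chilbert) y = complex_of_real r * cinner x y"
  by (metis cinner_commute cinner_scaleR_right complex_cnj_mult complex_cnj_complex_of_real)

lemma cinner_sum_left: "cinner (sum f S :: 'a::chilbert) y = (\<Sum>i\<in>S. cinner (f i) y)"
  by (induction S rule: infinite_finite_induct) (auto simp: cinner_add_left)

lemmas cinner_linear =
  cinner_add_left cinner_add_right cinner_diff_left cinner_diff_right cinner_minus_left
  cinner_minus_right cinner_scaleR_left cinner_scaleR_right cinner_sum_left cinner_sum_right

lemma cinner_self_eq_zero: "cinner x x = 0 \<Longrightarrow> (x::'a::chilbert) = 0"
  by (simp add: cinner_self_norm)

lemma csubspace_zero: "csubspace V \<Longrightarrow> 0 \<in> V"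
  by (simp add: csubspace_def)

lemma csubspace_add: "csubspace V \<Longrightarrow> x \<in> V \<Longrightarrow> y \<in> V \<Longrightarrow> x + y \<in> V"
  by (simp add: csubspace_def)

lemma csubspace_scaleR: "csubspace V \<Longrightarrow> x \<in> V \<Longrightarrow> r *\<^sub>R x \<in> V"
  by (simp add: csubspace_def scaleR_scaleC)

lemma csubspace_minus: "csubspace V \<Longrightarrow> x \<in> V \<Longrightarrow> - x \<in> V"
  using csubspace_scaleR[of V x "- 1"] by simp

lemma csubspace_diff: "csubspace V \<Longrightarrow> x \<in> V \<Longrightarrow> y \<in> V \<Longrightarrow> x - y \<in> V"
  using csubspace_add[of V x "- y"] csubspace_minus[of V y] by simp

lemma csubspace_sum: "csubspace V \<Longrightarrow> \<forall>i\<in>S. f i \<in> V \<Longrightarrow> sum f S \<in> V"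
  by (induction S rule: infinite_finite_induct) (auto simp: csubspace_zero csubspace_add)

lemmas csubspace_closed =
  csubspace_zero csubspace_add csubspace_scaleR csubspace_minus csubspace_diff csubspace_sum

text \<open>A vector of a subspace is determined by its inner products with the subspace: this is
  how every identity between adjoints below is proved.\<close>
lemma csubspace_eq_by_cinner:
  assumes "csubspace V" "a \<in> V" "b \<in> V" "\<And>u. u \<in> V \<Longrightarrow> cinner u a = cinner u b"
  shows "a = b"
proof -
  have "a - b \<in> V" using assms csubspace_diff by blast
  then have "cinner (a - b) (a - b) = 0" using assms(4) by (simp add: cinner_diff_right)
  then show ?thesis using cinner_self_eq_zero[of "a - b"] by simp
qed

section \<open>Operators possessing an adjoint on a subspace\<close>

text \<open>An operator is adjointable on V if some operator is its adjoint on the common invariant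
  domain V. Such operators are automatically linear on V, which supplies all linearity below.\<close>
definition adjointable :: "'a::chilbert set \<Rightarrow> ('a \<Rightarrow> 'a) \<Rightarrow> bool" where
  "adjointable V X \<longleftrightarrow> (\<exists>Xd. common_inv_dom V X Xd)"

lemma common_inv_dom_sym: "common_inv_dom V X Xd \<Longrightarrow> common_inv_dom V Xd X"
  unfolding common_inv_dom_def by (metis cinner_commute)

lemma common_inv_dom_adjointable:
  assumes "common_inv_dom V X Xd"
  shows "adjointable V X" "adjointable V Xd"
  using assms common_inv_dom_sym unfolding adjointable_def by blast+

lemma common_inv_dom_adjoint:
  assumes "common_inv_dom V X Xd" "u \<in> V" "v \<in> V"
  shows "cinner (X u) v = cinner u (Xd v)"
  using common_inv_dom_sym[OF assms(1)] assms(2,3) unfolding common_inv_dom_def by simp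

lemma adjointable_mem: "adjointable V X \<Longrightarrow> x \<in> V \<Longrightarrow> X x \<in> V"
  unfolding adjointable_def common_inv_dom_def by blast

lemma adjoint_eqI:
  assumes "csubspace V" "common_inv_dom V X Xd" "v \<in> V" "w \<in> V"
    and "\<And>u. u \<in> V \<Longrightarrow> cinner (X u) v = cinner u w"
  shows "Xd v = w"
proof (rule csubspace_eq_by_cinner[OF assms(1)])
  show "Xd v \<in> V" using assms(2,3) unfolding common_inv_dom_def by blast
  fix u assume "u \<in> V"
  then show "cinner u (Xd v) = cinner u w"
    using assms(3,5) common_inv_dom_adjoint[OF assms(2)] by simp
qed (use assms in simp)

lemma adjointable_add:
  assumes "csubspace V" "adjointable V X" "x \<in> V" "y \<in> V"
  shows "X (x + y) = X x + X y"
proof -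
  obtain Xd where X: "common_inv_dom V X Xd" using assms(2) unfolding adjointable_def by blast
  have "cinner u (X (x + y)) = cinner u (X x + X y)" if "u \<in> V" for u
    using X that assms(3,4) csubspace_add[OF assms(1)]
    unfolding common_inv_dom_def by (simp add: cinner_add_right)
  then show ?thesis
    using assms X by (intro csubspace_eq_by_cinner[OF assms(1)])
      (auto simp: common_inv_dom_def intro: csubspace_add)
qed

lemma adjointable_scaleR:
  assumes "csubspace V" "adjointable V X" "x \<in> V"
  shows "X (r *\<^sub>R x) = r *\<^sub>R X x"
proof -
  obtain Xd where X: "common_inv_dom V X Xd" using assms(2) unfolding adjointable_def by blast
  have "cinner u (X (r *\<^sub>R x)) = cinner u (r *\<^sub>R X x)" if "u \<in> V" for u
    using X that assms(3) csubspace_scaleR[OF assms(1)]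
    unfolding common_inv_dom_def by (simp add: cinner_scaleR_right)
  then show ?thesis
    using assms X by (intro csubspace_eq_by_cinner[OF assms(1)])
      (auto simp: common_inv_dom_def intro: csubspace_scaleR)
qed

lemma adjointable_zero: "csubspace V \<Longrightarrow> adjointable V X \<Longrightarrow> X 0 = 0"
  using adjointable_scaleR[of V X 0 0] csubspace_zero[of V] by simp

lemma adjointable_minus: "csubspace V \<Longrightarrow> adjointable V X \<Longrightarrow> x \<in> V \<Longrightarrow> X (- x) = - X x"
  using adjointable_scaleR[of V X x "- 1"] by simp

lemma adjointable_diff:
  "csubspace V \<Longrightarrow> adjointable V X \<Longrightarrow> x \<in> V \<Longrightarrow> y \<in> V \<Longrightarrow> X (x - y) = X x - X y"
  using adjointable_add[of V X x "- y"] adjointable_minus[of V X y] csubspace_minus[of V y] by simp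

lemma adjointable_sum:
  assumes "csubspace V" "adjointable V X" "\<forall>i\<in>S. f i \<in> V"
  shows "X (sum f S) = (\<Sum>i\<in>S. X (f i))"
  using assms(3)
proof (induction S rule: infinite_finite_induct)
  case (insert x F)
  then have "sum f F \<in> V" by (intro csubspace_sum[OF assms(1)]) auto
  with insert show ?case using adjointable_add[OF assms(1,2)] by simp
qed (use assms adjointable_zero in simp_all)

lemmas adjointable_linear =
  adjointable_add adjointable_scaleR adjointable_zero adjointable_minus adjointable_diff
  adjointable_sum

section \<open>Orthogonal projections\<close>

lemma proj_in: "is_orth_proj H P \<Longrightarrow> P x \<in> H"
  by (simp add: is_orth_proj_def)

lemma proj_orth: "is_orth_proj H P \<Longrightarrow> h \<in> H \<Longrightarrow> cinner h (x - P x) = 0"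
  by (simp add: is_orth_proj_def)

lemma proj_unique:
  assumes "csubspace H" "is_orth_proj H P" "p \<in> H" "\<And>h. h \<in> H \<Longrightarrow> cinner h (z - p) = 0"
  shows "P z = p"
proof -
  have m: "P z - p \<in> H" using assms csubspace_diff proj_in by blast
  have "cinner (P z - p) (P z - p) = cinner (P z - p) (z - p) - cinner (P z - p) (z - P z)"
    by (simp add: cinner_diff_right)
  also have "\<dots> = 0" using assms(2,4) m proj_orth by simp
  finally show ?thesis using cinner_self_eq_zero[of "P z - p"] by simp
qed

lemma proj_id: "csubspace H \<Longrightarrow> is_orth_proj H P \<Longrightarrow> h \<in> H \<Longrightarrow> P h = h"
  by (rule proj_unique) auto

lemma proj_idem: "csubspace H \<Longrightarrow> is_orth_proj H P \<Longrightarrow> P (P x) = P x"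
  using proj_id proj_in by blast

lemma proj_add:
  assumes "csubspace H" "is_orth_proj H P"
  shows "P (x + y) = P x + P y"
proof (rule proj_unique[OF assms])
  show "P x + P y \<in> H" using assms proj_in csubspace_add by blast
  fix h assume "h \<in> H"
  then show "cinner h (x + y - (P x + P y)) = 0"
    using proj_orth[OF assms(2)] cinner_add_right[of h "x - P x" "y - P y"]
    by (simp add: algebra_simps)
qed

lemma proj_scaleC:
  assumes "csubspace H" "is_orth_proj H P"
  shows "P (c *\<^sub>C x) = c *\<^sub>C P x"
proof (rule proj_unique[OF assms])
  show "c *\<^sub>C P x \<in> H" using assms(1) proj_in[OF assms(2)] unfolding csubspace_def by blast
  fix h assume "h \<in> H"
  have "cinner h (c *\<^sub>C x - c *\<^sub>C P x) = c * cinner h (x - P x)"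
    by (simp add: cinner_diff_right cinner_scaleC_right right_diff_distrib)
  then show "cinner h (c *\<^sub>C x - c *\<^sub>C P x) = 0"
    using proj_orth[OF assms(2) \<open>h \<in> H\<close>] by simp
qed

lemma proj_scaleR: "csubspace H \<Longrightarrow> is_orth_proj H P \<Longrightarrow> P (r *\<^sub>R x) = r *\<^sub>R P x"
  by (simp add: scaleR_scaleC proj_scaleC)

lemma proj_minus: "csubspace H \<Longrightarrow> is_orth_proj H P \<Longrightarrow> P (- x) = - P x"
  using proj_scaleR[of H P "- 1" x] by simp

lemma proj_diff: "csubspace H \<Longrightarrow> is_orth_proj H P \<Longrightarrow> P (x - y) = P x - P y"
  using proj_add[of H P x "- y"] proj_minus[of H P y] by simp

lemma proj_zero: "csubspace H \<Longrightarrow> is_orth_proj H P \<Longrightarrow> P 0 = 0"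
  using proj_scaleR[of H P 0 0] by simp

lemma proj_sum: "csubspace H \<Longrightarrow> is_orth_proj H P \<Longrightarrow> P (sum f S) = (\<Sum>i\<in>S. P (f i))"
  by (induction S rule: infinite_finite_induct) (auto simp: proj_add proj_zero)

lemmas proj_linear = proj_add proj_minus proj_diff proj_zero proj_sum proj_idem

lemma proj_selfadjoint:
  assumes "csubspace H" "is_orth_proj H P"
  shows "cinner (P x) y = cinner x (P y)"
proof -
  have "cinner (P x) y = cinner (P x) (P y)"
    using proj_orth[OF assms(2) proj_in[OF assms(2)], of x y] by (simp add: cinner_diff_right)
  moreover have "cinner (P y) x = cinner (P y) (P x)"
    using proj_orth[OF assms(2) proj_in[OF assms(2)], of y x] by (simp add: cinner_diff_right)
  ultimately show ?thesis by (metis cinner_commute)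
qed

lemma csubspace_proj_image:
  assumes "csubspace H" "is_orth_proj H P" "csubspace V"
  shows "csubspace (P ` V)"
  unfolding csubspace_def
proof (intro conjI ballI allI)
  show "0 \<in> P ` V" using proj_zero[OF assms(1,2)] csubspace_zero[OF assms(3)] by (metis image_eqI)
next
  fix x y assume "x \<in> P ` V" "y \<in> P ` V"
  then obtain a b where "a \<in> V" "b \<in> V" "x = P a" "y = P b" by blast
  then show "x + y \<in> P ` V"
    using proj_add[OF assms(1,2)] csubspace_add[OF assms(3)] by (metis image_eqI)
next
  fix c x assume "x \<in> P ` V"
  then obtain a where "a \<in> V" "x = P a" by blast
  then show "c *\<^sub>C x \<in> P ` V"
    using proj_scaleC[OF assms(1,2)] assms(3) unfolding csubspace_def by (metis image_eqI)
qed

lemma kdelta_apply: "f 0 = 0 \<Longrightarrow> f (kdelta a b x) = kdelta a b (f x)"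
  by (simp add: kdelta_def)

lemma kdelta_diff: "kdelta a b (x - y) = kdelta a b x - kdelta a b y"
  by (simp add: kdelta_def)

lemma kdelta_mem: "csubspace V \<Longrightarrow> x \<in> V \<Longrightarrow> kdelta a b x \<in> V"
  by (simp add: kdelta_def csubspace_zero)

lemma kdelta_cinner: "cinner (kdelta a b x) y = cinner x (kdelta a b y)"
  by (simp add: kdelta_def)

lemma kdelta_sum_left: "finite S \<Longrightarrow> j \<in> S \<Longrightarrow> (\<Sum>k\<in>S. kdelta k j (f k)) = f j"
  by (simp add: kdelta_def)

lemma kdelta_sum_right: "finite S \<Longrightarrow> j \<in> S \<Longrightarrow> (\<Sum>k\<in>S. kdelta j k (f k)) = f j"
  by (simp add: kdelta_def)

text \<open>Evaluating at k = 1, 2, 3 suffices.\<close>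
lemma quadratic_vanishing:
  fixes a b c :: "'a::real_vector"
  assumes "\<And>k::nat. k \<ge> 1 \<Longrightarrow> (real k)\<^sup>2 *\<^sub>R a + real k *\<^sub>R b + c = 0"
  shows "a = 0" "b = 0" "c = 0"
proof -
  have e1: "a + b + c = 0" using assms[of 1] by simp
  have e2: "4 *\<^sub>R a + 2 *\<^sub>R b + c = 0" using assms[of 2] by (simp add: power2_eq_square)
  have e3: "9 *\<^sub>R a + 3 *\<^sub>R b + c = 0" using assms[of 3] by (simp add: power2_eq_square)
  have "2 *\<^sub>R a = (9 - 2 * 4 + 1) *\<^sub>R a + (3 - 2 * 2 + 1) *\<^sub>R b + (1 - 2 + 1) *\<^sub>R c"
    by simp
  also have "\<dots> = (9 *\<^sub>R a + 3 *\<^sub>R b + c) - 2 *\<^sub>R (4 *\<^sub>R a + 2 *\<^sub>R b + c) + (a + b + c)"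
    by (simp only: scaleR_add_right scaleR_diff_right scaleR_scaleR scaleR_add_left
        scaleR_diff_left scaleR_one) (simp add: algebra_simps)
  finally show a: "a = 0" using e1 e2 e3 by simp
  have "b = (2 - 1) *\<^sub>R b + (1 - 1) *\<^sub>R c" by simp
  also have "\<dots> = (2 *\<^sub>R b + c) - (b + c)"
    by (simp only: scaleR_diff_left scaleR_one) (simp add: algebra_simps)
  also have "\<dots> = 0" using e1 e2 a by simp
  finally show b: "b = 0" .
  show "c = 0" using e1 a b by simp
qed

section \<open>Condition 1 under the singular scaling\<close>

locale hp_prelimit =
  fixes D :: "'a::chilbert set" and n :: nat
    and Kk Kkd :: "nat \<Rightarrow> 'a \<Rightarrow> 'a"
    and Lk Lkd :: "nat \<Rightarrow> nat \<Rightarrow> 'a \<Rightarrow> 'a"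
    and Nk Nkd :: "nat \<Rightarrow> nat \<Rightarrow> nat \<Rightarrow> 'a \<Rightarrow> 'a"
    and Y Yd A Ad B Bd :: "'a \<Rightarrow> 'a"
    and F Fd G Gd :: "nat \<Rightarrow> 'a \<Rightarrow> 'a"
    and W Wd :: "nat \<Rightarrow> nat \<Rightarrow> 'a \<Rightarrow> 'a"
  assumes D_subspace: "csubspace D"
    and dom_Kk: "\<And>k. k \<ge> 1 \<Longrightarrow> common_inv_dom D (Kk k) (Kkd k)"
    and dom_Lk: "\<And>k i. k \<ge> 1 \<Longrightarrow> i \<in> {1..n} \<Longrightarrow> common_inv_dom D (Lk k i) (Lkd k i)"
    and dom_Nk: "\<And>k i j. k \<ge> 1 \<Longrightarrow> i \<in> {1..n} \<Longrightarrow> j \<in> {1..n} \<Longrightarrow>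
                   common_inv_dom D (Nk k i j) (Nkd k i j)"
    and HP_K: "\<And>k v. k \<ge> 1 \<Longrightarrow> v \<in> D \<Longrightarrow>
                 Kk k v + Kkd k v = - (\<Sum>i = 1..n. Lk k i (Lkd k i v))"
    and HP_N1: "\<And>k m l v. k \<ge> 1 \<Longrightarrow> m \<in> {1..n} \<Longrightarrow> l \<in> {1..n} \<Longrightarrow> v \<in> D \<Longrightarrow>
                 (\<Sum>j = 1..n. Nk k m j (Nkd k l j v)) = kdelta m l v"
    and HP_N2: "\<And>k m l v. k \<ge> 1 \<Longrightarrow> m \<in> {1..n} \<Longrightarrow> l \<in> {1..n} \<Longrightarrow> v \<in> D \<Longrightarrow>
                 (\<Sum>j = 1..n. Nkd k j m (Nk k j l v)) = kdelta m l v"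
    and dom_Y: "common_inv_dom D Y Yd"
    and dom_A: "common_inv_dom D A Ad"
    and dom_B: "common_inv_dom D B Bd"
    and dom_F: "\<And>i. i \<in> {1..n} \<Longrightarrow> common_inv_dom D (F i) (Fd i)"
    and dom_G: "\<And>i. i \<in> {1..n} \<Longrightarrow> common_inv_dom D (G i) (Gd i)"
    and dom_W: "\<And>i j. i \<in> {1..n} \<Longrightarrow> j \<in> {1..n} \<Longrightarrow> common_inv_dom D (W i j) (Wd i j)"
    and scal_K: "\<And>k v. k \<ge> 1 \<Longrightarrow> v \<in> D \<Longrightarrow>
                   Kk k v = (of_nat k)\<^sup>2 *\<^sub>C Y v + of_nat k *\<^sub>C A v + B v"
    and scal_L: "\<And>k i v. k \<ge> 1 \<Longrightarrow> i \<in> {1..n} \<Longrightarrow> v \<in> D \<Longrightarrow>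
                   Lk k i v = of_nat k *\<^sub>C F i v + G i v"
    and scal_N: "\<And>k i j v. k \<ge> 1 \<Longrightarrow> i \<in> {1..n} \<Longrightarrow> j \<in> {1..n} \<Longrightarrow> v \<in> D \<Longrightarrow>
                   Nk k i j v = W i j v"
begin

lemmas adjointable_coefficients =
  common_inv_dom_adjointable[OF dom_Y] common_inv_dom_adjointable[OF dom_A]
  common_inv_dom_adjointable[OF dom_B] common_inv_dom_adjointable[OF dom_F]
  common_inv_dom_adjointable[OF dom_G] common_inv_dom_adjointable[OF dom_W]

lemmas adjoint_coefficients =
  common_inv_dom_adjoint[OF dom_Y] common_inv_dom_adjoint[OF dom_A]
  common_inv_dom_adjoint[OF dom_B] common_inv_dom_adjoint[OF dom_F]
  common_inv_dom_adjoint[OF dom_G] common_inv_dom_adjoint[OF dom_W]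
  common_inv_dom_adjoint[OF common_inv_dom_sym[OF dom_Y]]
  common_inv_dom_adjoint[OF common_inv_dom_sym[OF dom_A]]
  common_inv_dom_adjoint[OF common_inv_dom_sym[OF dom_B]]
  common_inv_dom_adjoint[OF common_inv_dom_sym[OF dom_F]]
  common_inv_dom_adjoint[OF common_inv_dom_sym[OF dom_G]]
  common_inv_dom_adjoint[OF common_inv_dom_sym[OF dom_W]]

lemmas coeff_simps = adjointable_linear[OF D_subspace] adjointable_mem[of D]
  adjointable_coefficients csubspace_closed[OF D_subspace]

lemma scal_K_real: "k \<ge> 1 \<Longrightarrow> v \<in> D \<Longrightarrow> Kk k v = (real k)\<^sup>2 *\<^sub>R Y v + real k *\<^sub>R A v + B v"
  by (simp add: scal_K scaleR_scaleC)

lemma scal_L_real: "k \<ge> 1 \<Longrightarrow> i \<in> {1..n} \<Longrightarrow> v \<in> D \<Longrightarrow> Lk k i v = real k *\<^sub>R F i v + G i v"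
  by (simp add: scal_L scaleR_scaleC)

lemma Lkd_eq:
  assumes "k \<ge> 1" "i \<in> {1..n}" "v \<in> D"
  shows "Lkd k i v = real k *\<^sub>R Fd i v + Gd i v"
proof (rule adjoint_eqI[OF D_subspace dom_Lk[OF assms(1,2)] assms(3)])
  fix u assume "u \<in> D"
  then show "cinner (Lk k i u) v = cinner u (real k *\<^sub>R Fd i v + Gd i v)"
    using assms by (simp add: scal_L_real cinner_linear coeff_simps adjoint_coefficients)
qed (use assms in \<open>simp add: coeff_simps\<close>)

lemma Kkd_eq:
  assumes "k \<ge> 1" "v \<in> D"
  shows "Kkd k v = (real k)\<^sup>2 *\<^sub>R Yd v + real k *\<^sub>R Ad v + Bd v"
proof (rule adjoint_eqI[OF D_subspace dom_Kk[OF assms(1)] assms(2)])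
  fix u assume "u \<in> D"
  then show "cinner (Kk k u) v = cinner u ((real k)\<^sup>2 *\<^sub>R Yd v + real k *\<^sub>R Ad v + Bd v)"
    using assms by (simp add: scal_K_real cinner_linear coeff_simps adjoint_coefficients)
qed (use assms in \<open>simp add: coeff_simps\<close>)

lemma Nkd_eq:
  assumes "k \<ge> 1" "i \<in> {1..n}" "j \<in> {1..n}" "v \<in> D"
  shows "Nkd k i j v = Wd i j v"
proof (rule adjoint_eqI[OF D_subspace dom_Nk[OF assms(1,2,3)] assms(4)])
  fix u assume "u \<in> D"
  then show "cinner (Nk k i j u) v = cinner u (Wd i j v)"
    using assms by (simp add: scal_N adjoint_coefficients)
qed (use assms in \<open>simp add: coeff_simps\<close>)

text \<open>Condition 1 for K, expanded in powers of k: the coefficient of each power of k must vanish.\<close>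
lemma HP_K_expansion:
  assumes "k \<ge> 1" "v \<in> D"
  shows "(real k)\<^sup>2 *\<^sub>R (Y v + Yd v + (\<Sum>i=1..n. F i (Fd i v)))
       + real k *\<^sub>R (A v + Ad v + (\<Sum>i=1..n. F i (Gd i v) + G i (Fd i v)))
       + (B v + Bd v + (\<Sum>i=1..n. G i (Gd i v))) = 0"
proof -
  have LL: "Lk k i (Lkd k i v) = (real k)\<^sup>2 *\<^sub>R F i (Fd i v)
      + real k *\<^sub>R (F i (Gd i v) + G i (Fd i v)) + G i (Gd i v)" if "i \<in> {1..n}" for i
    using assms that
    by (simp add: Lkd_eq scal_L_real coeff_simps algebra_simps power2_eq_square)
  have "Kk k v + Kkd k v + (\<Sum>i=1..n. Lk k i (Lkd k i v)) = 0"
    using HP_K[OF assms] by simp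
  then show ?thesis
    using assms by (simp add: LL scal_K_real Kkd_eq scaleR_sum_right sum.distrib
        algebra_simps)
qed

lemma sum_F_Fd: "v \<in> D \<Longrightarrow> (\<Sum>i=1..n. F i (Fd i v)) = - (Y v + Yd v)"
  using minus_unique[OF quadratic_vanishing(1)[OF HP_K_expansion]] by simp

lemma sum_FGd_GFd: "v \<in> D \<Longrightarrow> (\<Sum>i=1..n. F i (Gd i v) + G i (Fd i v)) = - (A v + Ad v)"
  using minus_unique[OF quadratic_vanishing(2)[OF HP_K_expansion]] by simp

lemma sum_G_Gd: "v \<in> D \<Longrightarrow> (\<Sum>i=1..n. G i (Gd i v)) = - (B v + Bd v)"
  using minus_unique[OF quadratic_vanishing(3)[OF HP_K_expansion]] by simp

lemma W_Wd: "m \<in> {1..n} \<Longrightarrow> l \<in> {1..n} \<Longrightarrow> v \<in> D \<Longrightarrow> (\<Sum>j=1..n. W m j (Wd l j v)) = kdelta m l v"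
  using HP_N1[of 1 m l v] by (simp add: scal_N Nkd_eq coeff_simps)

lemma Wd_W: "m \<in> {1..n} \<Longrightarrow> l \<in> {1..n} \<Longrightarrow> v \<in> D \<Longrightarrow> (\<Sum>j=1..n. Wd j m (W j l v)) = kdelta m l v"
  using HP_N2[of 1 m l v] by (simp add: scal_N Nkd_eq coeff_simps)

end

section \<open>The limit coefficients\<close>

locale hp_limit = hp_prelimit D n Kk Kkd Lk Lkd Nk Nkd Y Yd A Ad B Bd F Fd G Gd W Wd
  for D :: "'a::chilbert set" and n Kk Kkd Lk Lkd Nk Nkd Y Yd A Ad B Bd F Fd G Gd W Wd +
  fixes H0 :: "'a set" and P0 P1 Yt Ytd Kd :: "'a \<Rightarrow> 'a"
    and Ld :: "nat \<Rightarrow> 'a \<Rightarrow> 'a" and Nd :: "nat \<Rightarrow> nat \<Rightarrow> 'a \<Rightarrow> 'a"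
  assumes H0_subspace: "csubspace H0"
    and P0_proj: "is_orth_proj H0 P0"
    and P1_def: "\<And>x. P1 x = x - P0 x"
    and A2a: "P0 ` D \<subseteq> D"
    and A2c_dom: "common_inv_dom D Yt Ytd"
    and A2c: "\<And>v. v \<in> D \<Longrightarrow> Yt (Y v) = P1 v \<and> Y (Yt v) = P1 v"
    and A2d: "\<And>j v. j \<in> {1..n} \<Longrightarrow> v \<in> D \<Longrightarrow> Fd j (P0 v) = 0"
    and A2e: "\<And>v. v \<in> D \<Longrightarrow> P0 (A (P0 v)) = 0"
    and dom_K0: "common_inv_dom (P0 ` D) (limK P0 A B Yt) Kd"
    and dom_L0: "\<And>i. i \<in> {1..n} \<Longrightarrow> common_inv_dom (P0 ` D) (limL P0 A F G Yt i) (Ld i)"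
    and dom_N0: "\<And>i j. i \<in> {1..n} \<Longrightarrow> j \<in> {1..n} \<Longrightarrow>
                   common_inv_dom (P0 ` D) (limN n P0 F Fd W Yt i j) (Nd i j)"
    and A3a: "\<And>i v. i \<in> {1..n} \<Longrightarrow> v \<in> D \<Longrightarrow>
                P0 (G i (P1 v) - A (Yt (F i (P1 v)))) = 0"
    and A3b: "\<And>i j v. i \<in> {1..n} \<Longrightarrow> j \<in> {1..n} \<Longrightarrow> v \<in> D \<Longrightarrow>
                (\<Sum>l = 1..n. P0 (W i l (Fd l (Yt (F j (P1 v))) + kdelta l j (P1 v)))) = 0"
    and A3c: "\<And>i j v. i \<in> {1..n} \<Longrightarrow> j \<in> {1..n} \<Longrightarrow> v \<in> D \<Longrightarrow>
                (\<Sum>l = 1..n. P1 (W i l (Fd l (Yt (F j (P0 v))) + kdelta l j (P0 v)))) = 0"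
begin

abbreviation "D0 \<equiv> P0 ` D"
abbreviation "K0 \<equiv> limK P0 A B Yt"
abbreviation "L0 \<equiv> limL P0 A F G Yt"
abbreviation "M0 \<equiv> limM n P0 A Fd Gd W Yt"
abbreviation "N0 \<equiv> limN n P0 F Fd W Yt"

lemmas P0_linear = proj_linear[OF H0_subspace P0_proj]
lemmas P0_selfadjoint = proj_selfadjoint[OF H0_subspace P0_proj]

lemma P0_mem_D: "x \<in> D \<Longrightarrow> P0 x \<in> D"
  using A2a by blast

lemma D0_elem:
  assumes "v \<in> D0"
  shows "v \<in> D" "P0 v = v"
  using assms P0_mem_D P0_linear by auto

lemma D0_subspace: "csubspace D0"
  by (rule csubspace_proj_image[OF H0_subspace P0_proj D_subspace])

lemma P0_cinner_cancel: "P0 u = u \<Longrightarrow> cinner u (P0 x) = cinner u x"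
  using P0_selfadjoint[of u x] by simp

lemmas op_simps = coeff_simps common_inv_dom_adjointable[OF A2c_dom] P0_mem_D
  kdelta_mem[OF D_subspace] P0_linear

lemmas adjoints = adjoint_coefficients common_inv_dom_adjoint[OF A2c_dom]
  common_inv_dom_adjoint[OF common_inv_dom_sym[OF A2c_dom]]

lemma Yt_Y: "v \<in> D \<Longrightarrow> Yt (Y v) = v - P0 v"
  using A2c P1_def by simp

lemma Y_Yt: "v \<in> D \<Longrightarrow> Y (Yt v) = v - P0 v"
  using A2c P1_def by simp

text \<open>Taking adjoints in Assumption 2(c): Ytd inverts Yd on the range of P1.\<close>
lemma Yd_Ytd:
  assumes v: "v \<in> D"
  shows "Yd (Ytd v) = v - P0 v"
proof (rule csubspace_eq_by_cinner[OF D_subspace])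
  fix u assume u: "u \<in> D"
  have "cinner u (Yd (Ytd v)) = cinner (Yt (Y u)) v" using u v by (simp add: adjoints op_simps)
  also have "\<dots> = cinner u (v - P0 v)"
    using u by (simp add: Yt_Y cinner_linear P0_selfadjoint)
  finally show "cinner u (Yd (Ytd v)) = cinner u (v - P0 v)" .
qed (use v in \<open>simp_all add: op_simps\<close>)

lemma Ytd_Yd:
  assumes v: "v \<in> D"
  shows "Ytd (Yd v) = v - P0 v"
proof (rule csubspace_eq_by_cinner[OF D_subspace])
  fix u assume u: "u \<in> D"
  have "cinner u (Ytd (Yd v)) = cinner (Y (Yt u)) v" using u v by (simp add: adjoints op_simps)
  also have "\<dots> = cinner u (v - P0 v)"
    using u by (simp add: Y_Yt cinner_linear P0_selfadjoint)
  finally show "cinner u (Ytd (Yd v)) = cinner u (v - P0 v)" .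
qed (use v in \<open>simp_all add: op_simps\<close>)

text \<open>Adjoint form of Assumption 2(d): the operators F i map D into the orthocomplement of H0.\<close>
lemma P0_F:
  assumes i: "i \<in> {1..n}" and v: "v \<in> D"
  shows "P0 (F i v) = 0"
proof (rule csubspace_eq_by_cinner[OF D_subspace])
  fix u assume u: "u \<in> D"
  have "cinner u (P0 (F i v)) = cinner (Fd i (P0 u)) v"
    using i u v common_inv_dom_adjoint[OF common_inv_dom_sym[OF dom_F[OF i]], of "P0 u" v]
    by (simp add: P0_selfadjoint op_simps)
  also have "\<dots> = 0" using A2d[OF i u] by simp
  finally show "cinner u (P0 (F i v)) = cinner u 0" by simp
qed (use i v in \<open>simp_all add: op_simps\<close>)

text \<open>tilde Y maps D0 into H0, hence is annihilated there by the dagger of F and by P0 A.\<close>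
lemma P0_Yt_P0:
  assumes v: "v \<in> D"
  shows "P0 (Yt (P0 v)) = Yt (P0 v)"
proof -
  have "Y (Yt (P0 v)) = 0" using Y_Yt[of "P0 v"] v by (simp add: op_simps)
  then have "Yt (Y (Yt (P0 v))) = 0" using op_simps by simp
  then show ?thesis using Yt_Y[of "Yt (P0 v)"] v by (simp add: op_simps)
qed

lemma Fd_Yt_P0: "i \<in> {1..n} \<Longrightarrow> v \<in> D \<Longrightarrow> Fd i (Yt (P0 v)) = 0"
  using A2d[of i "Yt (P0 v)"] P0_Yt_P0[of v] by (simp add: op_simps)

lemma P0_A_Yt_P0: "v \<in> D \<Longrightarrow> P0 (A (Yt (P0 v))) = 0"
  using A2e[of "Yt (P0 v)"] P0_Yt_P0[of v] by (simp add: op_simps)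

lemma Kd_eq:
  assumes v: "v \<in> D0"
  shows "Kd v = P0 (Bd v - Ad (Ytd (Ad v)))"
proof (rule adjoint_eqI[OF D0_subspace dom_K0 v])
  fix u assume u: "u \<in> D0"
  show "cinner (K0 u) v = cinner u (P0 (Bd v - Ad (Ytd (Ad v))))"
    using D0_elem[OF u] D0_elem[OF v]
    by (simp add: limK_def P0_selfadjoint P0_cinner_cancel cinner_linear adjoints op_simps)
qed (use D0_elem[OF v] in \<open>intro imageI, simp add: op_simps\<close>)

lemma Ld_eq:
  assumes i: "i \<in> {1..n}" and v: "v \<in> D0"
  shows "Ld i v = P0 (Gd i v - Fd i (Ytd (Ad v)))"
proof (rule adjoint_eqI[OF D0_subspace dom_L0[OF i] v])
  fix u assume u: "u \<in> D0"
  show "cinner (L0 i u) v = cinner u (P0 (Gd i v - Fd i (Ytd (Ad v))))"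
    using i D0_elem[OF u] D0_elem[OF v]
    by (simp add: limL_def P0_selfadjoint P0_cinner_cancel cinner_linear adjoints op_simps)
qed (use i D0_elem[OF v] in \<open>intro imageI, simp add: op_simps\<close>)

lemma Nd_adjoint:
  assumes i: "i \<in> {1..n}" and j: "j \<in> {1..n}" and v: "v \<in> D0"
  shows "Nd i j v = (\<Sum>l=1..n. P0 (Fd j (Ytd (F l (Wd i l v))) + kdelta l j (Wd i l v)))"
proof (rule adjoint_eqI[OF D0_subspace dom_N0[OF i j] v])
  fix u assume u: "u \<in> D0"
  show "cinner (N0 i j u) v = cinner u (\<Sum>l=1..n. P0 (Fd j (Ytd (F l (Wd i l v))) + kdelta l j (Wd i l v)))"
    using i j D0_elem[OF u] D0_elem[OF v]
    by (simp add: limN_def P0_selfadjoint P0_cinner_cancel cinner_linear adjoints op_simps kdelta_cinner)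
next
  show "(\<Sum>l=1..n. P0 (Fd j (Ytd (F l (Wd i l v))) + kdelta l j (Wd i l v))) \<in> D0"
    unfolding P0_linear(5)[symmetric] using i j D0_elem[OF v] by (intro imageI) (simp add: op_simps)
qed

text \<open>Assumption 3 allows the inner projections P0 in L0 and N0 to be dropped.\<close>
lemma L0_P0:
  assumes i: "i \<in> {1..n}" and z: "z \<in> D"
  shows "L0 i (P0 z) = P0 (G i z - A (Yt (F i z)))"
proof -
  have "P0 (G i z - A (Yt (F i z))) - P0 (G i (P0 z) - A (Yt (F i (P0 z))))
      = P0 (G i (P1 z) - A (Yt (F i (P1 z))))"
    using i z by (simp add: P1_def op_simps algebra_simps)
  then show ?thesis using A3a[OF i z] by (simp add: limL_def P0_linear)
qed

lemma N0_P0: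
  assumes i: "i \<in> {1..n}" and j: "j \<in> {1..n}" and z: "z \<in> D"
  shows "N0 i j (P0 z) = (\<Sum>l=1..n. P0 (W i l (Fd l (Yt (F j z)) + kdelta l j z)))"
proof -
  have "(\<Sum>l=1..n. P0 (W i l (Fd l (Yt (F j z)) + kdelta l j z)))
      - (\<Sum>l=1..n. P0 (W i l (Fd l (Yt (F j (P0 z))) + kdelta l j (P0 z))))
      = (\<Sum>l=1..n. P0 (W i l (Fd l (Yt (F j (P1 z))) + kdelta l j (P1 z))))"
    using i j z by (simp add: P1_def op_simps kdelta_diff algebra_simps sum_subtractf[symmetric])
  then show ?thesis using A3b[OF i j z] by (simp add: limN_def P0_linear)
qed

text \<open>Assumption 3 also says that N0 needs no outer projection: it already maps D0 into H0.\<close>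
lemma N0_unprojected:
  assumes i: "i \<in> {1..n}" and j: "j \<in> {1..n}" and v: "v \<in> D0"
  shows "N0 i j v = (\<Sum>l=1..n. W i l (Fd l (Yt (F j v)) + kdelta l j v))"
proof -
  have "(\<Sum>l=1..n. W i l (Fd l (Yt (F j v)) + kdelta l j v))
      - (\<Sum>l=1..n. P0 (W i l (Fd l (Yt (F j v)) + kdelta l j v))) = 0"
    using A3c[OF i j D0_elem(1)[OF v]] D0_elem[OF v] by (simp add: P1_def sum_subtractf)
  then show ?thesis using D0_elem[OF v] by (simp add: limN_def)
qed

lemma sum_N0_P0:
  assumes i: "i \<in> {1..n}" and z: "\<forall>j\<in>{1..n}. z j \<in> D"
  shows "(\<Sum>j=1..n. N0 i j (P0 (z j)))
       = (\<Sum>l=1..n. P0 (W i l (Fd l (Yt (\<Sum>j=1..n. F j (z j))) + z l)))"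
proof -
  have "(\<Sum>j=1..n. N0 i j (P0 (z j)))
      = (\<Sum>j=1..n. \<Sum>l=1..n. P0 (W i l (Fd l (Yt (F j (z j))) + kdelta l j (z j))))"
    using i z by (intro sum.cong) (simp_all add: N0_P0)
  also have "\<dots> = (\<Sum>l=1..n. \<Sum>j=1..n. P0 (W i l (Fd l (Yt (F j (z j))) + kdelta l j (z j))))"
    by (rule sum.swap)
  also have "\<dots> = (\<Sum>l=1..n. P0 (W i l (Fd l (Yt (\<Sum>j=1..n. F j (z j))) + z l)))"
  proof (rule sum.cong[OF refl])
    fix l assume l: "l \<in> {1..n}"
    have "z l = (\<Sum>j=1..n. kdelta l j (z j))" using kdelta_sum_right[of "{1..n}" l z] l by simp
    then show "(\<Sum>j=1..n. P0 (W i l (Fd l (Yt (F j (z j))) + kdelta l j (z j))))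
        = P0 (W i l (Fd l (Yt (\<Sum>j=1..n. F j (z j))) + z l))"
      using i l z by (simp add: op_simps sum.distrib)
  qed
  finally show ?thesis .
qed

section \<open>The Hudson--Parthasarathy relations for the limit coefficients\<close>

text \<open>For v in D0 the adjoints Ld j v are projections of z j = Gd j v - Fd j (Ytd (Ad v)); this
  computes tilde Y applied to the sum of the F j (z j), the term through which both the K- and
  the M-relation pass.\<close>
lemma Yt_sum_F_Ld:
  assumes v: "v \<in> D0"
  shows "Yt (\<Sum>j=1..n. F j (Gd j v - Fd j (Ytd (Ad v))))
       = - Yt (A v) + (Ytd (Ad v) - P0 (Ytd (Ad v))) - Yt (P0 (Ad v))"
proof -
  note vD = D0_elem[OF v]
  define w where "w = Ytd (Ad v)"
  have wD: "w \<in> D" using vD by (simp add: w_def op_simps)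
  have Fd_v: "Fd j v = 0" if "j \<in> {1..n}" for j using A2d[OF that, of v] vD by simp
  have sum_F_Gd: "(\<Sum>j=1..n. F j (Gd j v)) = - (A v + Ad v)"
    using sum_FGd_GFd[OF vD(1)] by (simp add: Fd_v op_simps)
  have "(\<Sum>j=1..n. F j (Gd j v - Fd j w)) = (\<Sum>j=1..n. F j (Gd j v)) - (\<Sum>j=1..n. F j (Fd j w))"
    using vD wD by (simp add: op_simps sum_subtractf)
  also have "\<dots> = - (A v + Ad v) + Y w + Yd w"
    unfolding sum_F_Gd sum_F_Fd[OF wD] by simp
  finally have "Yt (\<Sum>j=1..n. F j (Gd j v - Fd j w)) = Yt (- (A v + Ad v) + Y w + Yd w)"
    by simp
  then show ?thesis using vD wD by (simp add: w_def op_simps Yt_Y Yd_Ytd algebra_simps)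
qed

text \<open>The K-relation. With w = Ytd (Ad v), the three coefficient identities of Condition 1
  reduce both sides to P0 B v + P0 Bd v - P0 A Yt A v - P0 Ad w.\<close>
lemma K_relation:
  assumes v: "v \<in> D0"
  shows "K0 v + Kd v = - (\<Sum>i=1..n. L0 i (Ld i v))"
proof -
  note vD = D0_elem[OF v]
  define w where "w = Ytd (Ad v)"
  define z where "z j = Gd j v - Fd j w" for j
  have wD: "w \<in> D" using vD by (simp add: w_def op_simps)
  have zD: "\<forall>j\<in>{1..n}. z j \<in> D" using vD wD by (simp add: z_def op_simps)
  have L_Ld: "L0 i (Ld i v) = P0 (G i (z i) - A (Yt (F i (z i))))" if i: "i \<in> {1..n}" for i
    using Ld_eq[OF i v] L0_P0[OF i] zD i by (simp add: z_def w_def)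
  have sum_L_Ld: "(\<Sum>i=1..n. L0 i (Ld i v))
      = P0 (\<Sum>i=1..n. G i (z i)) - P0 (A (Yt (\<Sum>i=1..n. F i (z i))))"
    using zD by (simp add: L_Ld op_simps sum_subtractf)
  have "P0 (A (Yt (\<Sum>i=1..n. F i (z i)))) = P0 (A (- Yt (A v) + (w - P0 w) - Yt (P0 (Ad v))))"
    unfolding z_def Yt_sum_F_Ld[OF v, folded w_def] ..
  also have "\<dots> = - P0 (A (Yt (A v))) + P0 (A w)"
    using vD wD A2e[OF wD] P0_A_Yt_P0[of "Ad v"] by (simp add: op_simps)
  finally have A_part: "P0 (A (Yt (\<Sum>i=1..n. F i (z i)))) = - P0 (A (Yt (A v))) + P0 (A w)" .
  have sum_G_Fd: "P0 (\<Sum>i=1..n. G i (Fd i w)) = - P0 (A w) - P0 (Ad w)"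
  proof -
    have "P0 (\<Sum>i=1..n. F i (Gd i w)) = 0" using wD by (simp add: op_simps P0_F)
    then show ?thesis using arg_cong[OF sum_FGd_GFd[OF wD], of P0] by (simp add: op_simps sum.distrib)
  qed
  have "P0 (\<Sum>i=1..n. G i (z i)) = P0 ((\<Sum>i=1..n. G i (Gd i v)) - (\<Sum>i=1..n. G i (Fd i w)))"
    using vD wD by (simp add: z_def op_simps sum_subtractf)
  also have "\<dots> = - P0 (B v + Bd v) + P0 (A w) + P0 (Ad w)"
    unfolding sum_G_Gd[OF vD(1)] P0_linear(3) sum_G_Fd by (simp add: op_simps)
  finally have G_part: "P0 (\<Sum>i=1..n. G i (z i)) = - P0 (B v + Bd v) + P0 (A w) + P0 (Ad w)" .
  have "K0 v + Kd v = P0 (B v) - P0 (A (Yt (A v))) + P0 (Bd v) - P0 (Ad w)"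
    using vD by (simp add: limK_def Kd_eq[OF v] w_def op_simps)
  then show ?thesis unfolding sum_L_Ld A_part G_part by (simp add: op_simps algebra_simps)
qed

text \<open>The M-relation: the vector Fd l (Yt (sum F z)) + z l simplifies to Gd l v - Fd l (Yt (A v)).\<close>
lemma M_relation:
  assumes i: "i \<in> {1..n}" and v: "v \<in> D0"
  shows "M0 i v = - (\<Sum>j=1..n. N0 i j (Ld j v))"
proof -
  note vD = D0_elem[OF v]
  define w where "w = Ytd (Ad v)"
  define z where "z j = Gd j v - Fd j w" for j
  have wD: "w \<in> D" using vD by (simp add: w_def op_simps)
  have zD: "\<forall>j\<in>{1..n}. z j \<in> D" using vD wD by (simp add: z_def op_simps)
  have "(\<Sum>j=1..n. N0 i j (Ld j v)) = (\<Sum>j=1..n. N0 i j (P0 (z j)))"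
    using v by (intro sum.cong) (simp_all add: Ld_eq z_def w_def)
  also have "\<dots> = (\<Sum>l=1..n. P0 (W i l (Fd l (Yt (\<Sum>j=1..n. F j (z j))) + z l)))"
    by (rule sum_N0_P0[OF i zD])
  also have "\<dots> = (\<Sum>l=1..n. P0 (W i l (Gd l v - Fd l (Yt (A v)))))"
  proof (rule sum.cong[OF refl])
    fix l assume l: "l \<in> {1..n}"
    have "Fd l (Yt (\<Sum>j=1..n. F j (z j))) + z l = Gd l v - Fd l (Yt (A v))"
      unfolding z_def Yt_sum_F_Ld[OF v, folded w_def]
      using l vD wD A2d[OF l wD] Fd_Yt_P0[OF l, of "Ad v"] by (simp add: op_simps)
    then show "P0 (W i l (Fd l (Yt (\<Sum>j=1..n. F j (z j))) + z l))
        = P0 (W i l (Gd l v - Fd l (Yt (A v))))" by simp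
  qed
  finally show ?thesis using vD by (simp add: limM_def)
qed

lemma Nd_eq:
  assumes i: "i \<in> {1..n}" and j: "j \<in> {1..n}" and v: "v \<in> D0"
  shows "Nd i j v = P0 (Fd j (Ytd (\<Sum>l=1..n. F l (Wd i l v)))) + P0 (Wd i j v)"
proof -
  have "(\<Sum>l=1..n. kdelta l j (Wd i l v)) = Wd i j v"
    using kdelta_sum_left[of "{1..n}" j "\<lambda>l. Wd i l v"] j by simp
  then show ?thesis
    unfolding Nd_adjoint[OF i j v] using i j D0_elem[OF v]
    by (simp add: op_simps sum.distrib flip: P0_linear(5))
qed

text \<open>Co-isometry of N: the adjoint Nd l j v is P0 (y j) with y j = Fd j q + Wd l j v, and tilde Y of
  the sum of the F j (y j) lies in H0, so the unitarity of W gives the Kronecker delta.\<close>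
lemma N_coisometry:
  assumes m: "m \<in> {1..n}" and l: "l \<in> {1..n}" and v: "v \<in> D0"
  shows "(\<Sum>j=1..n. N0 m j (Nd l j v)) = kdelta m l v"
proof -
  note vD = D0_elem[OF v]
  define r where "r = (\<Sum>k=1..n. F k (Wd l k v))"
  define q where "q = Ytd r"
  define y where "y j = Fd j q + Wd l j v" for j
  have rD: "r \<in> D" using l vD by (simp add: r_def op_simps)
  have qD: "q \<in> D" using rD by (simp add: q_def op_simps)
  have yD: "\<forall>j\<in>{1..n}. y j \<in> D" using l qD vD by (simp add: y_def op_simps)
  have P0_r: "P0 r = 0" using l vD by (simp add: r_def op_simps P0_F)
  have "(\<Sum>j=1..n. F j (y j)) = (\<Sum>j=1..n. F j (Fd j q)) + r"
    using l qD vD by (simp add: y_def r_def op_simps sum.distrib)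
  also have "\<dots> = - Y q"
    unfolding sum_F_Fd[OF qD] using Yd_Ytd[OF rD] P0_r by (simp add: q_def)
  finally have Yt_sum_F_y: "Yt (\<Sum>j=1..n. F j (y j)) = P0 q - q"
    using qD by (simp add: op_simps Yt_Y)
  have "(\<Sum>j=1..n. N0 m j (Nd l j v)) = (\<Sum>j=1..n. N0 m j (P0 (y j)))"
    using l v by (intro sum.cong) (simp_all add: Nd_eq y_def q_def r_def op_simps)
  also have "\<dots> = (\<Sum>a=1..n. P0 (W m a (Fd a (Yt (\<Sum>j=1..n. F j (y j))) + y a)))"
    by (rule sum_N0_P0[OF m yD])
  also have "\<dots> = P0 (\<Sum>a=1..n. W m a (Wd l a v))"
    unfolding Yt_sum_F_y using m qD vD A2d[OF _ qD] by (simp add: y_def op_simps)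
  also have "\<dots> = kdelta m l v"
    using W_Wd[OF m l vD(1)] vD(2) by (simp add: kdelta_apply P0_linear)
  finally show ?thesis .
qed

lemma sum_Nd:
  assumes m: "m \<in> {1..n}" and x: "\<forall>j\<in>{1..n}. x j \<in> D0"
  shows "(\<Sum>j=1..n. Nd j m (x j))
       = P0 (Fd m (Ytd (\<Sum>k=1..n. F k (\<Sum>j=1..n. Wd j k (x j))))) + P0 (\<Sum>j=1..n. Wd j m (x j))"
proof -
  have xD: "\<forall>j\<in>{1..n}. x j \<in> D" using x D0_elem by blast
  have "(\<Sum>k=1..n. F k (\<Sum>j=1..n. Wd j k (x j))) = (\<Sum>j=1..n. \<Sum>k=1..n. F k (Wd j k (x j)))"
    using xD by (subst sum.swap) (simp add: op_simps)
  then show ?thesis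
    using m x xD by (simp add: Nd_eq op_simps sum.distrib)
qed

text \<open>Isometry of N: N0 j l v = sum_a W j a (u a) with u a = Fd a p + kdelta a l v, p = Yt (F l v);
  unitarity of W recovers u, and the K-type identity for F turns the rest into the Kronecker delta.\<close>
lemma N_isometry:
  assumes m: "m \<in> {1..n}" and l: "l \<in> {1..n}" and v: "v \<in> D0"
  shows "(\<Sum>j=1..n. Nd j m (N0 j l v)) = kdelta m l v"
proof -
  note vD = D0_elem[OF v]
  define p where "p = Yt (F l v)"
  define u where "u a = Fd a p + kdelta a l v" for a
  have pD: "p \<in> D" using l vD by (simp add: p_def op_simps)
  have uD: "\<forall>a\<in>{1..n}. u a \<in> D" using pD vD by (simp add: u_def op_simps)
  have N0_D0: "\<forall>j\<in>{1..n}. N0 j l v \<in> D0"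
    using dom_N0 l v unfolding common_inv_dom_def by blast
  have Wd_N0: "(\<Sum>j=1..n. Wd j k (N0 j l v)) = u k" if k: "k \<in> {1..n}" for k
  proof -
    have "(\<Sum>j=1..n. Wd j k (N0 j l v)) = (\<Sum>a=1..n. \<Sum>j=1..n. Wd j k (W j a (u a)))"
      using k l v uD by (subst sum.swap) (simp add: N0_unprojected u_def p_def op_simps)
    also have "\<dots> = (\<Sum>a=1..n. kdelta k a (u a))"
      using k uD by (intro sum.cong[OF refl] Wd_W) auto
    also have "\<dots> = u k" using kdelta_sum_right[of "{1..n}" k u] k by simp
    finally show ?thesis .
  qed
  have Y_p: "Y p = F l v" using Y_Yt[of "F l v"] l vD by (simp add: p_def op_simps P0_F)
  have "(\<Sum>k=1..n. F k (u k)) = (\<Sum>k=1..n. F k (Fd k p)) + F l v"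
    using l pD vD by (simp add: u_def op_simps sum.distrib kdelta_apply kdelta_sum_left)
  then have sum_F_u: "(\<Sum>k=1..n. F k (u k)) = - Yd p"
    unfolding sum_F_Fd[OF pD] Y_p by simp
  have "(\<Sum>j=1..n. Nd j m (N0 j l v)) = P0 (Fd m (Ytd (- Yd p))) + P0 (u m)"
    using sum_Nd[OF m N0_D0] Wd_N0 sum_F_u m by simp
  also have "\<dots> = kdelta m l v"
    using m pD vD A2d[OF m pD] by (simp add: u_def Ytd_Yd op_simps kdelta_apply)
  finally show ?thesis .
qed

end

theorem lemma2:
  fixes D H0 :: "'a::chilbert set" and n :: nat
    and Kk Kkd :: "nat \<Rightarrow> 'a \<Rightarrow> 'a"
    and Lk Lkd Mk Mkd :: "nat \<Rightarrow> nat \<Rightarrow> 'a \<Rightarrow> 'a"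
    and Nk Nkd :: "nat \<Rightarrow> nat \<Rightarrow> nat \<Rightarrow> 'a \<Rightarrow> 'a"
    and Y Yd A Ad B Bd Yt Ytd P0 P1 :: "'a \<Rightarrow> 'a"
    and F Fd G Gd :: "nat \<Rightarrow> 'a \<Rightarrow> 'a"
    and W Wd :: "nat \<Rightarrow> nat \<Rightarrow> 'a \<Rightarrow> 'a"
    and Kd :: "'a \<Rightarrow> 'a"
    and Ld Md :: "nat \<Rightarrow> 'a \<Rightarrow> 'a"
    and Nd :: "nat \<Rightarrow> nat \<Rightarrow> 'a \<Rightarrow> 'a"
  assumes separable: "separable_hilbert TYPE('a)"
    and D_subspace: "csubspace D"
    and D_dense: "closure D = UNIV"
    \<comment> \<open>prelimit coefficients and their daggers have common invariant domain D (k \<in> \<nat> = {1,2,...})\<close>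
    and dom_Kk: "\<And>k. k \<ge> 1 \<Longrightarrow> common_inv_dom D (Kk k) (Kkd k)"
    and dom_Lk: "\<And>k i. k \<ge> 1 \<Longrightarrow> i \<in> {1..n} \<Longrightarrow> common_inv_dom D (Lk k i) (Lkd k i)"
    and dom_Mk: "\<And>k i. k \<ge> 1 \<Longrightarrow> i \<in> {1..n} \<Longrightarrow> common_inv_dom D (Mk k i) (Mkd k i)"
    and dom_Nk: "\<And>k i j. k \<ge> 1 \<Longrightarrow> i \<in> {1..n} \<Longrightarrow> j \<in> {1..n} \<Longrightarrow>
                   common_inv_dom D (Nk k i j) (Nkd k i j)"
    \<comment> \<open>Condition 1 (Hudson--Parthasarathy conditions on D)\<close>
    and HP_K: "\<And>k v. k \<ge> 1 \<Longrightarrow> v \<in> D \<Longrightarrow>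
                 Kk k v + Kkd k v = - (\<Sum>i = 1..n. Lk k i (Lkd k i v))"
    and HP_M: "\<And>k i v. k \<ge> 1 \<Longrightarrow> i \<in> {1..n} \<Longrightarrow> v \<in> D \<Longrightarrow>
                 Mk k i v = - (\<Sum>j = 1..n. Nk k i j (Lkd k j v))"
    and HP_N1: "\<And>k m l v. k \<ge> 1 \<Longrightarrow> m \<in> {1..n} \<Longrightarrow> l \<in> {1..n} \<Longrightarrow> v \<in> D \<Longrightarrow>
                 (\<Sum>j = 1..n. Nk k m j (Nkd k l j v)) = kdelta m l v"
    and HP_N2: "\<And>k m l v. k \<ge> 1 \<Longrightarrow> m \<in> {1..n} \<Longrightarrow> l \<in> {1..n} \<Longrightarrow> v \<in> D \<Longrightarrow>
                 (\<Sum>j = 1..n. Nkd k j m (Nk k j l v)) = kdelta m l v"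
    \<comment> \<open>Assumption 1 (singular scaling)\<close>
    and dom_Y: "common_inv_dom D Y Yd"
    and dom_A: "common_inv_dom D A Ad"
    and dom_B: "common_inv_dom D B Bd"
    and dom_F: "\<And>i. i \<in> {1..n} \<Longrightarrow> common_inv_dom D (F i) (Fd i)"
    and dom_G: "\<And>i. i \<in> {1..n} \<Longrightarrow> common_inv_dom D (G i) (Gd i)"
    and dom_W: "\<And>i j. i \<in> {1..n} \<Longrightarrow> j \<in> {1..n} \<Longrightarrow> common_inv_dom D (W i j) (Wd i j)"
    and scal_K: "\<And>k v. k \<ge> 1 \<Longrightarrow> v \<in> D \<Longrightarrow>
                   Kk k v = (of_nat k)\<^sup>2 *\<^sub>C Y v + of_nat k *\<^sub>C A v + B v"
    and scal_L: "\<And>k i v. k \<ge> 1 \<Longrightarrow> i \<in> {1..n} \<Longrightarrow> v \<in> D \<Longrightarrow>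
                   Lk k i v = of_nat k *\<^sub>C F i v + G i v"
    and scal_N: "\<And>k i j v. k \<ge> 1 \<Longrightarrow> i \<in> {1..n} \<Longrightarrow> j \<in> {1..n} \<Longrightarrow> v \<in> D \<Longrightarrow>
                   Nk k i j v = W i j v"
    \<comment> \<open>Assumption 2 (structure)\<close>
    and H0_closed: "closed H0"
    and H0_subspace: "csubspace H0"
    and P0_proj: "is_orth_proj H0 P0"
    and P1_def: "\<And>x. P1 x = x - P0 x"
    and A2a: "P0 ` D \<subseteq> D"
    and A2b: "\<And>v. v \<in> D \<Longrightarrow> Y (P0 v) = 0"
    and A2c_dom: "common_inv_dom D Yt Ytd"
    and A2c: "\<And>v. v \<in> D \<Longrightarrow> Yt (Y v) = P1 v \<and> Y (Yt v) = P1 v"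
    and A2d: "\<And>j v. j \<in> {1..n} \<Longrightarrow> v \<in> D \<Longrightarrow> Fd j (P0 v) = 0"
    and A2e: "\<And>v. v \<in> D \<Longrightarrow> P0 (A (P0 v)) = 0"
    \<comment> \<open>Assumption 3 (limit coefficients), with D0 = P0 ` D\<close>
    and dom_K0: "common_inv_dom (P0 ` D) (limK P0 A B Yt) Kd"
    and dom_L0: "\<And>i. i \<in> {1..n} \<Longrightarrow> common_inv_dom (P0 ` D) (limL P0 A F G Yt i) (Ld i)"
    and dom_M0: "\<And>i. i \<in> {1..n} \<Longrightarrow> common_inv_dom (P0 ` D) (limM n P0 A Fd Gd W Yt i) (Md i)"
    and dom_N0: "\<And>i j. i \<in> {1..n} \<Longrightarrow> j \<in> {1..n} \<Longrightarrow>
                   common_inv_dom (P0 ` D) (limN n P0 F Fd W Yt i j) (Nd i j)"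
    and A3a: "\<And>i v. i \<in> {1..n} \<Longrightarrow> v \<in> D \<Longrightarrow>
                P0 (G i (P1 v) - A (Yt (F i (P1 v)))) = 0"
    and A3b: "\<And>i j v. i \<in> {1..n} \<Longrightarrow> j \<in> {1..n} \<Longrightarrow> v \<in> D \<Longrightarrow>
                (\<Sum>l = 1..n. P0 (W i l (Fd l (Yt (F j (P1 v))) + kdelta l j (P1 v)))) = 0"
    and A3c: "\<And>i j v. i \<in> {1..n} \<Longrightarrow> j \<in> {1..n} \<Longrightarrow> v \<in> D \<Longrightarrow>
                (\<Sum>l = 1..n. P1 (W i l (Fd l (Yt (F j (P0 v))) + kdelta l j (P0 v)))) = 0"
  shows "(\<forall>v \<in> P0 ` D. limK P0 A B Yt v + Kd v = - (\<Sum>i = 1..n. limL P0 A F G Yt i (Ld i v)))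
       \<and> (\<forall>i \<in> {1..n}. \<forall>v \<in> P0 ` D.
            limM n P0 A Fd Gd W Yt i v = - (\<Sum>j = 1..n. limN n P0 F Fd W Yt i j (Ld j v)))
       \<and> (\<forall>m \<in> {1..n}. \<forall>l \<in> {1..n}. \<forall>v \<in> P0 ` D.
            (\<Sum>j = 1..n. limN n P0 F Fd W Yt m j (Nd l j v)) = kdelta m l v
          \<and> (\<Sum>j = 1..n. Nd j m (limN n P0 F Fd W Yt j l v)) = kdelta m l v)"
proof -
  interpret hp_limit D n Kk Kkd Lk Lkd Nk Nkd Y Yd A Ad B Bd F Fd G Gd W Wd H0 P0 P1 Yt Ytd Kd Ld Nd
    by unfold_locales (fact assms)+
  show ?thesis
    by (intro conjI ballI) (assumption | rule K_relation M_relation N_coisometry N_isometry)+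
qed

end
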